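(* Let $X$ be the ARH(1) process described in the context, with $k_n$ a truncation parameter ($k_n\to\infty$, $k_n/n<1$) such that, for some $\beta>1/2$, $\sqrt{k_n}\,\Lambda_{k_n}=o\left(n^{1/4}/(\ln(n))^{\beta}\right)$. Assume Assumptions A1, A2, A3 and A4 hold and that $\rho$ is a trace operator. Suppose $M_n$ is a sequence with $\|\mathcal{D}_n\mathcal{C}_n^{-1}-D_XC_X^{-1}\|_{\mathcal{L}(H)}=\mathcal{O}(M_n)$ almost surely, and $k_n\Lambda^{\rho}_{k_n}=o(1/M_n)$ as $n\to\infty$. Define the diagonal componentwise estimator $$\widehat\rho_{k_n}(x)=\sum_{j=1}^{k_n}\widehat\rho_{n,j}\langle x,\psi_{n,j}\rangle_H\,\widetilde\psi_{n,j},\quad x\in H.$$ Then $\|\widehat\rho_{k_n}-\rho\|_{\mathcal{L}(H)}\to0$ almost surely as $n\to\infty$.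
   Context: $H$ is a real separable Hilbert space and $\mathcal{L}(H)$ is the space of bounded linear operators on $H$ with the operator norm. $X=\{X_n,\ n\in\mathbb{Z}\}$ is a zero-mean ARH(1) process: $X_n=\rho(X_{n-1})+\varepsilon_n$, where $\rho\in\mathcal{L}(H)$ satisfies $\|\rho^k\|_{\mathcal{L}(H)}<1$ for all $k\ge k_0$, for some $k_0$; $\varepsilon$ is an $H$-valued strong white noise uncorrelated with the initial condition, and $X$ is the unique stationary solution. For $x,y\in H$, $(x\otimes y)(f)=\langle x,f\rangle_H\, y$. $C_X=\mathrm{E}[X_0\otimes X_0]$ has eigenvalues $C_1\ge C_2\ge\dots$ with orthonormal eigenvectors $\phi_j$; $D_X=\mathrm{E}[X_0\otimes X_1]$, and $\rho=D_XC_X^{-1}$. $\mathcal{C}_n=\frac1n\sum_{i=0}^{n-1}X_i\otimes X_i$ has eigenvalues $C_{n,1}\ge\dots\ge C_{n,n}\ge0=C_{n,n+1}=\dots$ with orthonormal eigenvectors $\phi_{n,j}$; $\mathcal{C}_n^{-1}=\sum_{j:\,C_{n,j}>0}C_{n,j}^{-1}\phi_{n,j}\otimes\phi_{n,j}$. $\mathcal{D}_n=\frac{1}{n-1}\sum_{i=0}^{n-2}X_i\otimes X_{i+1}$. $\Lambda_{k_n}=\sup_{1\le j\le k_n}(C_j-C_{j+1})^{-1}$. Assumption A1: $\|X_0\|_H<M$ a.s. Assumption A2: $C_{n,k_n}>0$ a.s. Assumption A3: $C_j>0$ for all $j$, $D_X$ is nuclear, and $\rho$ is compact. Under A3, $\rho$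 has the singular value decomposition $\rho(x)=\sum_{j\ge1}\rho_j\langle x,\psi_j\rangle_H\widetilde\psi_j$, with $\rho(\psi_j)=\rho_j\widetilde\psi_j$, orthonormal right singular vectors $\psi_j$, orthonormal left singular vectors $\widetilde\psi_j$, and $|\rho_1|\ge|\rho_2|\ge\dots$. The compact operator $\mathcal{D}_n\mathcal{C}_n^{-1}$ (for $n$ large) has singular value decomposition $\mathcal{D}_n\mathcal{C}_n^{-1}(h)=\sum_{j=1}^{n}\widehat\rho_{n,j}\langle h,\psi_{n,j}\rangle_H\widetilde\psi_{n,j}$, with $\mathcal{D}_n\mathcal{C}_n^{-1}(\psi_{n,j})=\widehat\rho_{n,j}\widetilde\psi_{n,j}$ and orthonormal families $\{\psi_{n,j}\}$, $\{\widetilde\psi_{n,j}\}$. $\Lambda^{\rho}_{k_n}=\sup_{1\le j\le k_n}(|\rho_j|^2-|\rho_{j+1}|^2)^{-1}$ (assumed finite). Assumption A4: $\sup_{j\ge1}|\rho_j|+\sup_{j\ge1}|\widehat\rho_{n,j}|\le 1$. *)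

theory Defs
  imports "HOL-Probability.Probability" "HOL-Library.Landau_Symbols"
begin

definition tensor_op :: "'h::real_inner \<Rightarrow> 'h \<Rightarrow> 'h \<Rightarrow> 'h" where
  "tensor_op x y f = inner x f *\<^sub>R y"

definition orthonormal_on :: "nat set \<Rightarrow> (nat \<Rightarrow> 'h::real_inner) \<Rightarrow> bool" where
  "orthonormal_on J e \<longleftrightarrow> (\<forall>i\<in>J. \<forall>j\<in>J. inner (e i) (e j) = (if i = j then 1 else 0))"

definition nuclear_op :: "('h::real_inner \<Rightarrow> 'h) \<Rightarrow> bool" where
  "nuclear_op T \<longleftrightarrow> bounded_linear T \<and>
     (\<exists>a b :: nat \<Rightarrow> 'h. summable (\<lambda>j. norm (a j) * norm (b j)) \<and>
        (\<forall>x. (\<lambda>j. inner (a j) x *\<^sub>R b j) sums T x))"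

definition compact_op :: "('h::real_normed_vector \<Rightarrow> 'h) \<Rightarrow> bool" where
  "compact_op T \<longleftrightarrow> bounded_linear T \<and> compact (closure (T ` ball 0 1))"

text \<open>C_X = E[X_0 \<otimes> X_0], D_X = E[X_0 \<otimes> X_1], applied pointwise (Bochner integrals in H).\<close>
definition cov_op :: "'a measure \<Rightarrow> ('a \<Rightarrow> 'h::{real_inner,banach,second_countable_topology})
    \<Rightarrow> ('a \<Rightarrow> 'h) \<Rightarrow> 'h \<Rightarrow> 'h" where
  "cov_op P U V f = (\<integral>\<omega>. tensor_op (U \<omega>) (V \<omega>) f \<partial>P)"

definition emp_cov :: "(int \<Rightarrow> 'a \<Rightarrow> 'h::real_inner) \<Rightarrow> nat \<Rightarrow> 'a \<Rightarrow> 'h \<Rightarrow> 'h" where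
  "emp_cov X n \<omega> f = (1 / real n) *\<^sub>R (\<Sum>i<n. tensor_op (X (int i) \<omega>) (X (int i) \<omega>) f)"

definition emp_cross :: "(int \<Rightarrow> 'a \<Rightarrow> 'h::real_inner) \<Rightarrow> nat \<Rightarrow> 'a \<Rightarrow> 'h \<Rightarrow> 'h" where
  "emp_cross X n \<omega> f = (1 / (real n - 1)) *\<^sub>R
      (\<Sum>i<n - 1. tensor_op (X (int i) \<omega>) (X (int i + 1) \<omega>) f)"

text \<open>C_n^{-1} = sum over j with C_{n,j} > 0 of C_{n,j}^{-1} \<phi>_{n,j} \<otimes> \<phi>_{n,j},
  built from the eigen-data (Cn, phin) of C_n (eigenvalues C_{n,j} = 0 for j > n).\<close>
definition emp_cov_inv :: "(nat \<Rightarrow> 'a \<Rightarrow> nat \<Rightarrow> real) \<Rightarrow> (nat \<Rightarrow> 'a \<Rightarrow> nat \<Rightarrow> 'h::real_inner)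
    \<Rightarrow> nat \<Rightarrow> 'a \<Rightarrow> 'h \<Rightarrow> 'h" where
  "emp_cov_inv Cn phin n \<omega> f =
     (\<Sum>j\<in>{j\<in>{1..n}. Cn n \<omega> j > 0}. inverse (Cn n \<omega> j) *\<^sub>R tensor_op (phin n \<omega> j) (phin n \<omega> j) f)"

definition Lambda_gap :: "(nat \<Rightarrow> real) \<Rightarrow> nat \<Rightarrow> real" where
  "Lambda_gap C k = Max ((\<lambda>j. inverse (C j - C (Suc j))) ` {1..k})"

definition Lambda_rho :: "(nat \<Rightarrow> real) \<Rightarrow> nat \<Rightarrow> real" where
  "Lambda_rho r k = Max ((\<lambda>j. inverse (\<bar>r j\<bar>^2 - \<bar>r (Suc j)\<bar>^2)) ` {1..k})"

definition diag_est :: "(nat \<Rightarrow> 'a \<Rightarrow> nat \<Rightarrow> real) \<Rightarrow> (nat \<Rightarrow> 'a \<Rightarrow> nat \<Rightarrow> 'h::real_inner)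
    \<Rightarrow> (nat \<Rightarrow> 'a \<Rightarrow> nat \<Rightarrow> 'h) \<Rightarrow> nat \<Rightarrow> nat \<Rightarrow> 'a \<Rightarrow> 'h \<Rightarrow> 'h" where
  "diag_est rh ps pst kn n \<omega> x = (\<Sum>j\<in>{1..kn}. (rh n \<omega> j * inner x (ps n \<omega> j)) *\<^sub>R pst n \<omega> j)"

end

theory Submission
  imports Defs
begin

text \<open>Write \<open>T\<^sub>n = D\<^sub>n C\<^sub>n\<^sup>-\<^sup>1\<close> with singular values \<open>\<bar>rh\<^sub>n\<^sub>j\<bar>\<close>, and \<open>E\<^sub>n = \<parallel>T\<^sub>n - \<rho>\<parallel>\<close>.
  Cutting the singular value decomposition of \<open>T\<^sub>n\<close> after \<open>k\<close> terms costs \<open>\<bar>rh\<^sub>n\<^sub>,\<^sub>k\<^sub>+\<^sub>1\<bar>\<close>, so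
  the estimator is within \<open>\<bar>rh\<^sub>n\<^sub>,\<^sub>k\<^sub>+\<^sub>1\<bar> + E\<^sub>n\<close> of \<open>\<rho>\<close>; a Weyl-type min-max argument (a unit
  vector in the span of the first \<open>k + 1\<close> right singular vectors of \<open>T\<^sub>n\<close> that is orthogonal to
  the first \<open>k\<close> right singular vectors of \<open>\<rho>\<close>) gives \<open>\<bar>rh\<^sub>n\<^sub>,\<^sub>k\<^sub>+\<^sub>1\<bar> \<le> \<bar>r\<^sub>k\<^sub>+\<^sub>1\<bar> + E\<^sub>n\<close>.
  The singular values \<open>r\<^sub>j\<close> of the compact operator \<open>\<rho>\<close> tend to zero, and \<open>E\<^sub>n = O(M\<^sub>n)\<close> tends
  to zero because \<open>k\<^sub>n \<Lambda>\<^sup>\<rho>\<^sub>k\<^sub>n = o(1/M\<^sub>n)\<close> while \<open>k\<^sub>n \<Lambda>\<^sup>\<rho>\<^sub>k\<^sub>n \<rightarrow> \<infinity>\<close>.\<close>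

definition svd_partial :: "(nat \<Rightarrow> real) \<Rightarrow> (nat \<Rightarrow> 'h::real_inner) \<Rightarrow> (nat \<Rightarrow> 'h) \<Rightarrow> nat \<Rightarrow> 'h \<Rightarrow> 'h"
  where "svd_partial a u v m x = (\<Sum>j\<in>{1..m}. (a j * inner x (u j)) *\<^sub>R v j)"

lemma diag_est_eq_svd_partial:
  "diag_est rh ps pst kn n \<omega> = svd_partial (rh n \<omega>) (ps n \<omega>) (pst n \<omega>) kn"
  by (simp add: fun_eq_iff diag_est_def svd_partial_def)

lemma bounded_linear_svd_partial: "bounded_linear (svd_partial a u v m)"
  unfolding svd_partial_def
  by (intro bounded_linear_sum bounded_linear_scaleR_const bounded_linear_const_mult
      bounded_linear_inner_left)

lemma orthonormal_onD:
  "orthonormal_on J e \<Longrightarrow> i \<in> J \<Longrightarrow> j \<in> J \<Longrightarrow> inner (e i) (e j) = (if i = j then 1 else 0)"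
  unfolding orthonormal_on_def by blast

lemma orthonormal_on_subset: "orthonormal_on J e \<Longrightarrow> F \<subseteq> J \<Longrightarrow> orthonormal_on F e"
  unfolding orthonormal_on_def by blast

lemma inner_sum_orthonormal:
  assumes "orthonormal_on F e" "finite F" "i \<in> F"
  shows "inner (\<Sum>j\<in>F. a j *\<^sub>R e j) (e i) = a i"
proof -
  have "inner (\<Sum>j\<in>F. a j *\<^sub>R e j) (e i) = (\<Sum>j\<in>F. a j * (if j = i then 1 else 0))"
    using assms by (auto simp: inner_sum_left orthonormal_onD intro!: sum.cong)
  also have "\<dots> = a i"
    using assms(2,3) by (simp add: if_distrib sum.delta' cong: if_cong)
  finally show ?thesis .
qed

lemma norm_sum_orthonormal:
  assumes "orthonormal_on F e" "finite F"
  shows "(norm (\<Sum>j\<in>F. a j *\<^sub>R e j))\<^sup>2 = (\<Sum>j\<in>F. (a j)\<^sup>2)"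
proof -
  have "(norm (\<Sum>j\<in>F. a j *\<^sub>R e j))\<^sup>2 = (\<Sum>i\<in>F. a i * inner (\<Sum>j\<in>F. a j *\<^sub>R e j) (e i))"
    by (simp add: power2_norm_eq_inner inner_sum_right mult.commute)
  also have "\<dots> = (\<Sum>i\<in>F. (a i)\<^sup>2)"
    using assms by (simp add: inner_sum_orthonormal power2_eq_square)
  finally show ?thesis .
qed

lemma bessel_inequality:
  assumes "orthonormal_on F e" "finite F"
  shows "(\<Sum>j\<in>F. (inner x (e j))\<^sup>2) \<le> (norm x)\<^sup>2"
proof -
  define y where "y = (\<Sum>j\<in>F. inner x (e j) *\<^sub>R e j)"
  have "(norm y)\<^sup>2 = (\<Sum>j\<in>F. (inner x (e j))\<^sup>2)"
    unfolding y_def using assms by (rule norm_sum_orthonormal)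
  moreover have "inner x y = (\<Sum>j\<in>F. (inner x (e j))\<^sup>2)"
    unfolding y_def by (simp add: inner_sum_right power2_eq_square)
  moreover have "0 \<le> (norm x)\<^sup>2 - 2 * inner x y + (norm y)\<^sup>2"
    using zero_le_power2[of "norm (x - y)"]
    by (simp add: power2_norm_eq_inner inner_diff_left inner_diff_right inner_commute)
  ultimately show ?thesis
    by linarith
qed

lemma orthonormal_expansion:
  assumes "orthonormal_on F e" "finite F" "x \<in> span (e ` F)"
  shows "x = (\<Sum>j\<in>F. inner x (e j) *\<^sub>R e j)"
  using assms(3)
proof (induction rule: span_induct)
  case base
  show ?case
    unfolding subspace_def
  proof (intro conjI allI ballI impI)
    fix c x
    assume "x \<in> {x. x = (\<Sum>j\<in>F. inner x (e j) *\<^sub>R e j)}"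
    then have x: "x = (\<Sum>j\<in>F. inner x (e j) *\<^sub>R e j)"
      by simp
    have "(\<Sum>j\<in>F. inner (c *\<^sub>R x) (e j) *\<^sub>R e j) = c *\<^sub>R (\<Sum>j\<in>F. inner x (e j) *\<^sub>R e j)"
      by (simp add: scaleR_sum_right)
    then show "c *\<^sub>R x \<in> {x. x = (\<Sum>j\<in>F. inner x (e j) *\<^sub>R e j)}"
      using x by simp
  qed (auto simp: inner_add_left scaleR_add_left sum.distrib)
next
  case (step x)
  then obtain i where i: "i \<in> F" "x = e i"
    by auto
  then have "(\<Sum>j\<in>F. inner x (e j) *\<^sub>R e j) = (\<Sum>j\<in>F. if j = i then e i else 0)"
    using assms(1) by (intro sum.cong) (auto simp: orthonormal_onD)
  then show ?case
    using i assms(2) by simp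
qed

lemma norm_sum_orthonormal_le:
  assumes "orthonormal_on F u" "orthonormal_on F v" "finite F" "s \<ge> 0"
    and "\<And>j. j \<in> F \<Longrightarrow> \<bar>c j\<bar> \<le> s * \<bar>inner x (u j)\<bar>"
  shows "norm (\<Sum>j\<in>F. c j *\<^sub>R v j) \<le> s * norm x"
proof -
  have "(norm (\<Sum>j\<in>F. c j *\<^sub>R v j))\<^sup>2 = (\<Sum>j\<in>F. (c j)\<^sup>2)"
    using assms(2,3) by (rule norm_sum_orthonormal)
  also have "\<dots> \<le> (\<Sum>j\<in>F. s\<^sup>2 * (inner x (u j))\<^sup>2)"
  proof (rule sum_mono)
    fix j
    assume "j \<in> F"
    then have "\<bar>c j\<bar>\<^sup>2 \<le> (s * \<bar>inner x (u j)\<bar>)\<^sup>2"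
      using assms(5) by (intro power_mono) auto
    then show "(c j)\<^sup>2 \<le> s\<^sup>2 * (inner x (u j))\<^sup>2"
      by (simp add: power_mult_distrib)
  qed
  also have "\<dots> \<le> s\<^sup>2 * (norm x)\<^sup>2"
    using bessel_inequality[OF assms(1,3)] by (simp add: sum_distrib_left[symmetric] mult_left_mono)
  also have "\<dots> = (s * norm x)\<^sup>2"
    by (simp add: power_mult_distrib)
  finally show ?thesis
    by (rule power2_le_imp_le) (simp add: assms(4))
qed

lemma abs_decreasing_on_interval:
  fixes f :: "nat \<Rightarrow> real"
  assumes "\<And>j. 1 \<le> j \<Longrightarrow> j < n \<Longrightarrow> \<bar>f (Suc j)\<bar> \<le> \<bar>f j\<bar>" "1 \<le> i" "i \<le> j" "j \<le> n"
  shows "\<bar>f j\<bar> \<le> \<bar>f i\<bar>"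
  using assms(3,4)
proof (induction j rule: dec_induct)
  case (step m)
  then show ?case
    using assms(1)[of m] assms(2) by simp
qed simp

lemma dist_orthonormal_ge:
  assumes "orthonormal_on J e" "i \<in> J" "j \<in> J" "i \<noteq> j"
  shows "\<bar>a\<bar> \<le> dist (a *\<^sub>R e i) (b *\<^sub>R e j)"
proof -
  have "(dist (a *\<^sub>R e i) (b *\<^sub>R e j))\<^sup>2 = inner (a *\<^sub>R e i - b *\<^sub>R e j) (a *\<^sub>R e i - b *\<^sub>R e j)"
    by (simp add: dist_norm power2_norm_eq_inner)
  also have "\<dots> = a\<^sup>2 + b\<^sup>2"
    using assms by (simp add: inner_diff_left inner_diff_right orthonormal_onD power2_eq_square)
  finally have "(dist (a *\<^sub>R e i) (b *\<^sub>R e j))\<^sup>2 = a\<^sup>2 + b\<^sup>2" .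
  then have "\<bar>a\<bar>\<^sup>2 \<le> (dist (a *\<^sub>R e i) (b *\<^sub>R e j))\<^sup>2"
    by simp
  then show ?thesis
    by (rule power2_le_imp_le) simp
qed

lemma linear_kernel_meets_span:
  fixes f :: "'a::real_vector \<Rightarrow> 'b::real_vector"
  assumes lin: "linear f" and indep: "independent V" and W: "finite W" "f ` V \<subseteq> span W"
    and card: "card W < card V"
  shows "\<exists>x\<in>span V. x \<noteq> 0 \<and> f x = 0"
proof -
  have "\<not> inj_on f (span V)"
  proof
    assume inj_f: "inj_on f (span V)"
    have "card V = card (f ` V)"
      using card_image[OF inj_on_subset[OF inj_f span_superset]] by simp
    also have "\<dots> \<le> card W"
      using independent_span_bound[OF W(1) linear_independent_injective_image[OF lin indep inj_f] W(2)]
      by simp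
    finally show False
      using card by simp
  qed
  then obtain a b where "a \<in> span V" "b \<in> span V" "a \<noteq> b" "f a = f b"
    unfolding inj_on_def by blast
  then show ?thesis
    using linear_diff[OF lin, of a b] by (intro bexI[of _ "a - b"]) (auto simp: span_diff)
qed

lemma exists_unit_vector_in_span_orthogonal:
  fixes v w :: "nat \<Rightarrow> 'h::real_inner"
  assumes v: "orthonormal_on F v" "finite F" and G: "finite G" "card G < card F"
  shows "\<exists>x. norm x = 1 \<and> x \<in> span (v ` F) \<and> (\<forall>i\<in>G. inner x (w i) = 0)"
proof -
  define f where "f y = (\<Sum>i\<in>G. inner y (w i) *\<^sub>R w i)" for y
  have lin: "linear f"
    unfolding f_def
    by (intro bounded_linear.linear bounded_linear_sum bounded_linear_scaleR_const
        bounded_linear_inner_left)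
  have inj_v: "inj_on v F"
    by (rule inj_onI) (metis v(1) orthonormal_onD one_neq_zero)
  have indep: "independent (v ` F)"
    by (rule pairwise_orthogonal_independent)
      (use orthonormal_onD[OF v(1)] in \<open>force simp: pairwise_def orthogonal_def\<close>)+
  have "f ` v ` F \<subseteq> span (w ` G)"
    unfolding f_def by (intro image_subsetI span_sum span_scale) (simp add: span_base)
  moreover have "card (w ` G) < card (v ` F)"
    using card_image_le[OF G(1), of w] card_image[OF inj_v] G(2) by simp
  ultimately obtain x0 where x0: "x0 \<in> span (v ` F)" "x0 \<noteq> 0" "f x0 = 0"
    using linear_kernel_meets_span[OF lin indep finite_imageI[OF G(1)]] by blast
  have "(\<Sum>i\<in>G. (inner x0 (w i))\<^sup>2) = inner x0 (f x0)"
    by (simp add: f_def inner_sum_right power2_eq_square)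
  then have "\<forall>i\<in>G. inner x0 (w i) = 0"
    using x0(3) sum_nonneg_eq_0_iff[OF G(1), of "\<lambda>i. (inner x0 (w i))\<^sup>2"] by simp
  then show ?thesis
    using x0 by (intro exI[of _ "x0 /\<^sub>R norm x0"]) (simp add: span_scale)
qed

lemma norm_svd_limit_le:
  fixes \<rho> :: "'h::real_inner \<Rightarrow> 'h"
  assumes psi: "orthonormal_on {1..} \<psi>" and psit: "orthonormal_on {1..} \<psi>t"
    and svd: "(\<lambda>m. svd_partial r \<psi> \<psi>t m x) \<longlonglongrightarrow> \<rho> x"
    and r_mono: "\<And>j. j \<ge> 1 \<Longrightarrow> \<bar>r (Suc j)\<bar> \<le> \<bar>r j\<bar>"
    and orth: "\<forall>i\<in>{1..k}. inner x (\<psi> i) = 0"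
  shows "norm (\<rho> x) \<le> \<bar>r (Suc k)\<bar> * norm x"
proof -
  have "norm (svd_partial r \<psi> \<psi>t m x) \<le> \<bar>r (Suc k)\<bar> * norm x" for m
    unfolding svd_partial_def
  proof (rule norm_sum_orthonormal_le)
    fix j assume j: "j \<in> {1..m}"
    show "\<bar>r j * inner x (\<psi> j)\<bar> \<le> \<bar>r (Suc k)\<bar> * \<bar>inner x (\<psi> j)\<bar>"
    proof (cases "j \<le> k")
      case True
      then show ?thesis
        using orth j by simp
    next
      case False
      then have "\<bar>r j\<bar> \<le> \<bar>r (Suc k)\<bar>"
        using abs_decreasing_on_interval[of "Suc j" r "Suc k" j] r_mono by simp
      then show ?thesis
        by (simp add: abs_mult mult_right_mono)
    qed
  qed (auto intro: orthonormal_on_subset[OF psi] orthonormal_on_subset[OF psit])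
  then show ?thesis
    by (intro LIMSEQ_le_const2[OF tendsto_norm[OF svd]]) simp
qed

lemma svd_right_singular_vector:
  assumes psi: "orthonormal_on {1..} \<psi>" "j \<ge> 1"
    and svd: "(\<lambda>m. svd_partial r \<psi> \<psi>t m (\<psi> j)) \<longlonglongrightarrow> \<rho> (\<psi> j)"
  shows "\<rho> (\<psi> j) = r j *\<^sub>R \<psi>t j"
proof -
  have "svd_partial r \<psi> \<psi>t m (\<psi> j) = r j *\<^sub>R \<psi>t j" if "m \<ge> j" for m
  proof -
    have "svd_partial r \<psi> \<psi>t m (\<psi> j) = (\<Sum>i\<in>{1..m}. if i = j then r j *\<^sub>R \<psi>t j else 0)"
      unfolding svd_partial_def using psi by (intro sum.cong) (auto simp: orthonormal_onD)
    then show ?thesis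
      using that psi(2) by simp
  qed
  then have "(\<lambda>m. svd_partial r \<psi> \<psi>t m (\<psi> j)) \<longlonglongrightarrow> r j *\<^sub>R \<psi>t j"
    by (intro tendsto_eventually eventually_sequentiallyI)
  then show ?thesis
    using svd LIMSEQ_unique by blast
qed

text \<open>If all \<open>\<bar>r\<^sub>j\<bar> \<ge> e\<close>, the images \<open>\<rho> (\<psi>\<^sub>j / 2) = (r\<^sub>j / 2) \<psi>t\<^sub>j\<close>, which lie in a compact set,
  would be pairwise at distance at least \<open>e / 2\<close>.\<close>
lemma exists_singular_value_less:
  fixes \<rho> :: "'h::real_inner \<Rightarrow> 'h"
  assumes cpt: "compact_op \<rho>" and psi: "orthonormal_on {1..} \<psi>" and psit: "orthonormal_on {1..} \<psi>t"
    and svd: "\<And>x. (\<lambda>m. svd_partial r \<psi> \<psi>t m x) \<longlonglongrightarrow> \<rho> x"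
    and "e > 0"
  shows "\<exists>j\<ge>1. \<bar>r j\<bar> < e"
proof (rule ccontr)
  assume "\<not> ?thesis"
  then have large: "\<And>j. j \<ge> 1 \<Longrightarrow> e \<le> \<bar>r j\<bar>"
    by force
  define f where "f j = \<rho> ((1/2) *\<^sub>R \<psi> (Suc j))" for j
  have lin: "linear \<rho>"
    using cpt by (simp add: compact_op_def bounded_linear.linear)
  have f_eq: "f j = (r (Suc j) / 2) *\<^sub>R \<psi>t (Suc j)" for j
    using svd_right_singular_vector[where j="Suc j" and \<rho>=\<rho>, OF psi _ svd] linear_scale[OF lin]
    by (simp add: f_def)
  have "(1/2) *\<^sub>R \<psi> (Suc j) \<in> ball 0 1" for j
    using orthonormal_onD[OF psi, of "Suc j" "Suc j"] by (simp add: norm_eq_sqrt_inner)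
  then have "f j \<in> closure (\<rho> ` ball 0 1)" for j
    unfolding f_def by (meson closure_subset imageI subsetD)
  then obtain l \<sigma> where \<sigma>: "strict_mono \<sigma>" "(f \<circ> \<sigma>) \<longlonglongrightarrow> l"
    using cpt unfolding compact_op_def compact_def by metis
  then obtain M where M: "\<And>m n. m \<ge> M \<Longrightarrow> n \<ge> M \<Longrightarrow> dist (f (\<sigma> m)) (f (\<sigma> n)) < e / 2"
    using LIMSEQ_imp_Cauchy[OF \<sigma>(2)] \<open>e > 0\<close> unfolding Cauchy_def
    by (metis comp_apply half_gt_zero)
  have "Suc (\<sigma> M) \<noteq> Suc (\<sigma> (Suc M))"
    using strict_monoD[OF \<sigma>(1), of M "Suc M"] by simp
  then have "\<bar>r (Suc (\<sigma> M)) / 2\<bar> \<le> dist (f (\<sigma> M)) (f (\<sigma> (Suc M)))"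
    unfolding f_eq by (intro dist_orthonormal_ge[OF psit]) auto
  then show False
    using M[of M "Suc M"] large[of "Suc (\<sigma> M)"] by simp
qed

lemma singular_values_tendsto_zero:
  fixes \<rho> :: "'h::real_inner \<Rightarrow> 'h"
  assumes "compact_op \<rho>" "orthonormal_on {1..} \<psi>" "orthonormal_on {1..} \<psi>t"
    and "\<And>x. (\<lambda>m. svd_partial r \<psi> \<psi>t m x) \<longlonglongrightarrow> \<rho> x"
    and r_mono: "\<And>j. j \<ge> 1 \<Longrightarrow> \<bar>r (Suc j)\<bar> \<le> \<bar>r j\<bar>"
  shows "r \<longlonglongrightarrow> 0"
proof (rule LIMSEQ_I)
  fix e :: real
  assume "e > 0"
  then obtain j where j: "j \<ge> 1" "\<bar>r j\<bar> < e"
    using exists_singular_value_less[OF assms(1-4)] by blast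
  have "\<bar>r n\<bar> < e" if "n \<ge> j" for n
    using abs_decreasing_on_interval[of "Suc n" r j n] r_mono j that by fastforce
  then show "\<exists>N. \<forall>n\<ge>N. norm (r n - 0) < e"
    by auto
qed

lemma norm_svd_partial_ge:
  assumes "k < n" and ps: "orthonormal_on {1..n} ps" and pst: "orthonormal_on {1..n} pst"
    and rh_mono: "\<And>j. 1 \<le> j \<Longrightarrow> j < n \<Longrightarrow> \<bar>rh (Suc j)\<bar> \<le> \<bar>rh j\<bar>"
    and x: "x \<in> span (ps ` {1..Suc k})"
  shows "\<bar>rh (Suc k)\<bar> * norm x \<le> norm (svd_partial rh ps pst n x)"
proof -
  have sub: "{1..Suc k} \<subseteq> {1..n}"
    using assms(1) by auto
  have ps_k: "orthonormal_on {1..Suc k} ps"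
    by (rule orthonormal_on_subset[OF ps sub])
  have "x = (\<Sum>j\<in>{1..Suc k}. inner x (ps j) *\<^sub>R ps j)"
    by (rule orthonormal_expansion[OF ps_k _ x]) simp
  then have norm_x: "(norm x)\<^sup>2 = (\<Sum>j\<in>{1..Suc k}. (inner x (ps j))\<^sup>2)"
    using norm_sum_orthonormal[OF ps_k, of "\<lambda>j. inner x (ps j)"] by simp
  have "(\<bar>rh (Suc k)\<bar> * norm x)\<^sup>2 = (\<Sum>j\<in>{1..Suc k}. (rh (Suc k))\<^sup>2 * (inner x (ps j))\<^sup>2)"
    by (simp add: norm_x power_mult_distrib sum_distrib_left distrib_left)
  also have "\<dots> \<le> (\<Sum>j\<in>{1..Suc k}. (rh j * inner x (ps j))\<^sup>2)"
  proof (rule sum_mono)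
    fix j
    assume "j \<in> {1..Suc k}"
    then have "\<bar>rh (Suc k)\<bar>\<^sup>2 \<le> \<bar>rh j\<bar>\<^sup>2"
      using abs_decreasing_on_interval[of n rh j "Suc k"] rh_mono assms(1)
      by (intro power_mono) auto
    then show "(rh (Suc k))\<^sup>2 * (inner x (ps j))\<^sup>2 \<le> (rh j * inner x (ps j))\<^sup>2"
      by (simp add: power_mult_distrib mult_right_mono)
  qed
  also have "\<dots> \<le> (\<Sum>j\<in>{1..n}. (rh j * inner x (ps j))\<^sup>2)"
    by (rule sum_mono2) (use sub in auto)
  also have "\<dots> = (norm (svd_partial rh ps pst n x))\<^sup>2"
    unfolding svd_partial_def by (rule norm_sum_orthonormal[OF pst, symmetric]) simp
  finally show ?thesis
    by (rule power2_le_imp_le) simp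
qed

lemma svd_partial_truncation_error_le:
  fixes \<rho> :: "'h::real_inner \<Rightarrow> 'h"
  assumes "k \<le> n" and ps: "orthonormal_on {1..n} ps" and pst: "orthonormal_on {1..n} pst"
    and rh_mono: "\<And>j. 1 \<le> j \<Longrightarrow> j < n \<Longrightarrow> \<bar>rh (Suc j)\<bar> \<le> \<bar>rh j\<bar>"
    and bl: "bounded_linear \<rho>"
  shows "onorm (\<lambda>x. svd_partial rh ps pst k x - \<rho> x)
    \<le> \<bar>rh (Suc k)\<bar> + onorm (\<lambda>x. svd_partial rh ps pst n x - \<rho> x)"
proof (rule onorm_bound)
  let ?E = "\<lambda>x. svd_partial rh ps pst n x - \<rho> x"
  have bl_E: "bounded_linear ?E"
    by (rule bounded_linear_sub[OF bounded_linear_svd_partial bl])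
  show "0 \<le> \<bar>rh (Suc k)\<bar> + onorm ?E"
    using onorm_pos_le[OF bl_E] by simp
  fix x
  define tail where "tail = (\<Sum>j\<in>{Suc k..n}. (rh j * inner x (ps j)) *\<^sub>R pst j)"
  have "svd_partial rh ps pst n x = svd_partial rh ps pst k x + tail"
    unfolding svd_partial_def tail_def
    using sum.ub_add_nat[of 1 k "\<lambda>j. (rh j * inner x (ps j)) *\<^sub>R pst j" "n - k"] assms(1) by simp
  then have split: "svd_partial rh ps pst k x - \<rho> x = ?E x - tail"
    by (simp add: algebra_simps)
  have "norm tail \<le> \<bar>rh (Suc k)\<bar> * norm x"
    unfolding tail_def
  proof (rule norm_sum_orthonormal_le)
    fix j
    assume "j \<in> {Suc k..n}"
    then have "\<bar>rh j\<bar> \<le> \<bar>rh (Suc k)\<bar>"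
      using abs_decreasing_on_interval[of n rh "Suc k" j] rh_mono by simp
    then show "\<bar>rh j * inner x (ps j)\<bar> \<le> \<bar>rh (Suc k)\<bar> * \<bar>inner x (ps j)\<bar>"
      by (simp add: abs_mult mult_right_mono)
  qed (auto intro: orthonormal_on_subset[OF ps] orthonormal_on_subset[OF pst])
  moreover have "norm (?E x) \<le> onorm ?E * norm x"
    by (rule onorm[OF bl_E])
  ultimately show "norm (svd_partial rh ps pst k x - \<rho> x) \<le> (\<bar>rh (Suc k)\<bar> + onorm ?E) * norm x"
    unfolding split distrib_right using norm_triangle_ineq4[of "?E x" tail] by linarith
qed

lemma singular_value_perturbation_le:
  fixes \<rho> :: "'h::real_inner \<Rightarrow> 'h"
  assumes "k < n" and ps: "orthonormal_on {1..n} ps" and pst: "orthonormal_on {1..n} pst"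
    and rh_mono: "\<And>j. 1 \<le> j \<Longrightarrow> j < n \<Longrightarrow> \<bar>rh (Suc j)\<bar> \<le> \<bar>rh j\<bar>"
    and psi: "orthonormal_on {1..} \<psi>" and psit: "orthonormal_on {1..} \<psi>t"
    and svd: "\<And>x. (\<lambda>m. svd_partial r \<psi> \<psi>t m x) \<longlonglongrightarrow> \<rho> x"
    and r_mono: "\<And>j. j \<ge> 1 \<Longrightarrow> \<bar>r (Suc j)\<bar> \<le> \<bar>r j\<bar>"
    and bl: "bounded_linear \<rho>"
  shows "\<bar>rh (Suc k)\<bar> \<le> \<bar>r (Suc k)\<bar> + onorm (\<lambda>x. svd_partial rh ps pst n x - \<rho> x)"
proof -
  let ?E = "\<lambda>x. svd_partial rh ps pst n x - \<rho> x"
  obtain x where x: "norm x = 1" "x \<in> span (ps ` {1..Suc k})" "\<forall>i\<in>{1..k}. inner x (\<psi> i) = 0"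
    using exists_unit_vector_in_span_orthogonal[of "{1..Suc k}" ps "{1..k}" \<psi>]
      orthonormal_on_subset[OF ps] assms(1) by auto
  have "\<bar>rh (Suc k)\<bar> \<le> norm (svd_partial rh ps pst n x)"
    using norm_svd_partial_ge[where rh=rh, OF assms(1) ps pst rh_mono x(2)] x(1) by simp
  moreover have "norm (\<rho> x) \<le> \<bar>r (Suc k)\<bar> * norm x"
    using psi psit svd r_mono x(3) by (rule norm_svd_limit_le)
  moreover have "norm (?E x) \<le> onorm ?E * norm x"
    by (rule onorm[OF bounded_linear_sub[OF bounded_linear_svd_partial bl]])
  ultimately show ?thesis
    using norm_triangle_sub[of "svd_partial rh ps pst n x" "\<rho> x"] x(1) by simp
qed

lemma truncated_svd_error_le:
  fixes \<rho> :: "'h::real_inner \<Rightarrow> 'h"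
  assumes "k < n" "orthonormal_on {1..n} ps" "orthonormal_on {1..n} pst"
    and "\<And>j. 1 \<le> j \<Longrightarrow> j < n \<Longrightarrow> \<bar>rh (Suc j)\<bar> \<le> \<bar>rh j\<bar>"
    and "orthonormal_on {1..} \<psi>" "orthonormal_on {1..} \<psi>t"
    and "\<And>x. (\<lambda>m. svd_partial r \<psi> \<psi>t m x) \<longlonglongrightarrow> \<rho> x"
    and "\<And>j. j \<ge> 1 \<Longrightarrow> \<bar>r (Suc j)\<bar> \<le> \<bar>r j\<bar>"
    and "bounded_linear \<rho>"
  shows "onorm (\<lambda>x. svd_partial rh ps pst k x - \<rho> x)
    \<le> \<bar>r (Suc k)\<bar> + 2 * onorm (\<lambda>x. svd_partial rh ps pst n x - \<rho> x)"
  using svd_partial_truncation_error_le[where rh=rh and \<rho>=\<rho>, OF less_imp_le[OF assms(1)] assms(2-4,9)]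
    singular_value_perturbation_le[where rh=rh and \<rho>=\<rho>, OF assms] by linarith

lemma tendsto_zero_if_bigo:
  fixes f g :: "'b \<Rightarrow> real"
  assumes "f \<in> O[F](g)" "(g \<longlongrightarrow> 0) F"
  shows "(f \<longlongrightarrow> 0) F"
proof -
  obtain c where "\<forall>\<^sub>F x in F. norm (f x) \<le> c * norm (g x)"
    using landau_o.bigE[OF assms(1)] by blast
  then show ?thesis
    by (rule Lim_null_comparison) (intro tendsto_mult_right_zero tendsto_norm_zero assms(2))
qed

lemma tendsto_zero_if_smallo_inverse:
  fixes g M :: "'b \<Rightarrow> real"
  assumes g: "filterlim g at_top F" and o: "g \<in> o[F](\<lambda>x. 1 / M x)"
  shows "(M \<longlongrightarrow> 0) F"
proof (rule Lim_null_comparison)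
  have "\<forall>\<^sub>F x in F. \<bar>g x\<bar> \<le> 1 * \<bar>1 / M x\<bar>"
    using landau_o.smallD[OF o, of 1] by simp
  moreover have "\<forall>\<^sub>F x in F. 1 \<le> g x"
    using g unfolding filterlim_at_top by blast
  ultimately show "\<forall>\<^sub>F x in F. norm (M x) \<le> inverse (g x)"
  proof eventually_elim
    case (elim x)
    then show ?case
      by (cases "M x = 0") (simp_all add: field_simps)
  qed
  show "((\<lambda>x. inverse (g x)) \<longlongrightarrow> 0) F"
    by (rule tendsto_inverse_0_at_top[OF g])
qed

lemma filterlim_Lambda_rho_at_top:
  fixes k :: "'b \<Rightarrow> nat"
  assumes "\<bar>r (Suc 1)\<bar> < \<bar>r 1\<bar>" and k: "filterlim k at_top F"
  shows "filterlim (\<lambda>n. real (k n) * Lambda_rho r (k n)) at_top F"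
proof (rule filterlim_at_top_mono)
  have "\<bar>r (Suc 1)\<bar>\<^sup>2 < \<bar>r 1\<bar>\<^sup>2"
    using assms(1) by (intro power_strict_mono) auto
  then have pos: "Lambda_rho r 1 > 0"
    by (simp add: Lambda_rho_def)
  show "filterlim (\<lambda>n. real (k n) * Lambda_rho r 1) at_top F"
    by (rule filterlim_at_top_mult_tendsto_pos[OF tendsto_const pos
          filterlim_compose[OF filterlim_real_sequentially k]])
  have "\<forall>\<^sub>F n in F. 1 \<le> k n"
    using k unfolding filterlim_at_top by blast
  then show "\<forall>\<^sub>F n in F. real (k n) * Lambda_rho r 1 \<le> real (k n) * Lambda_rho r (k n)"
    by eventually_elim (auto simp: Lambda_rho_def intro!: mult_left_mono Max_ge)
qed

lemma truncated_svd_tendsto_zero: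
  fixes \<rho> :: "'h::real_inner \<Rightarrow> 'h" and rh :: "nat \<Rightarrow> nat \<Rightarrow> real" and ps pst :: "nat \<Rightarrow> nat \<Rightarrow> 'h"
  assumes k_lt: "\<And>n. 1 \<le> n \<Longrightarrow> k n < n" and k_lim: "filterlim k at_top sequentially"
    and ps: "\<And>n. orthonormal_on {1..n} (ps n)" and pst: "\<And>n. orthonormal_on {1..n} (pst n)"
    and rh_mono: "\<And>n j. 1 \<le> j \<Longrightarrow> j < n \<Longrightarrow> \<bar>rh n (Suc j)\<bar> \<le> \<bar>rh n j\<bar>"
    and cpt: "compact_op \<rho>" and psi: "orthonormal_on {1..} \<psi>" and psit: "orthonormal_on {1..} \<psi>t"
    and svd: "\<And>x. (\<lambda>m. svd_partial r \<psi> \<psi>t m x) \<longlonglongrightarrow> \<rho> x"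
    and r_mono: "\<And>j. j \<ge> 1 \<Longrightarrow> \<bar>r (Suc j)\<bar> \<le> \<bar>r j\<bar>"
    and E0: "(\<lambda>n. onorm (\<lambda>x. svd_partial (rh n) (ps n) (pst n) n x - \<rho> x)) \<longlonglongrightarrow> 0"
  shows "(\<lambda>n. onorm (\<lambda>x. svd_partial (rh n) (ps n) (pst n) (k n) x - \<rho> x)) \<longlonglongrightarrow> 0"
proof (rule Lim_null_comparison)
  let ?E = "\<lambda>n. onorm (\<lambda>x. svd_partial (rh n) (ps n) (pst n) n x - \<rho> x)"
  have bl: "bounded_linear \<rho>"
    using cpt by (simp add: compact_op_def)
  show "\<forall>\<^sub>F n in sequentially.
      norm (onorm (\<lambda>x. svd_partial (rh n) (ps n) (pst n) (k n) x - \<rho> x)) \<le> \<bar>r (Suc (k n))\<bar> + 2 * ?E n"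
  proof (rule eventually_sequentiallyI)
    fix n :: nat
    assume "1 \<le> n"
    then have "onorm (\<lambda>x. svd_partial (rh n) (ps n) (pst n) (k n) x - \<rho> x) \<le> \<bar>r (Suc (k n))\<bar> + 2 * ?E n"
      by (intro truncated_svd_error_le[where rh="rh n" and r=r and \<rho>=\<rho>,
            OF k_lt ps pst rh_mono psi psit svd r_mono bl])
    moreover have "0 \<le> onorm (\<lambda>x. svd_partial (rh n) (ps n) (pst n) (k n) x - \<rho> x)"
      by (rule onorm_pos_le[OF bounded_linear_sub[OF bounded_linear_svd_partial bl]])
    ultimately show "norm (onorm (\<lambda>x. svd_partial (rh n) (ps n) (pst n) (k n) x - \<rho> x))
        \<le> \<bar>r (Suc (k n))\<bar> + 2 * ?E n"
      by simp
  qed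
  have "r \<longlonglongrightarrow> 0"
    using cpt psi psit svd r_mono by (rule singular_values_tendsto_zero)
  then have "(\<lambda>n. \<bar>r (Suc (k n))\<bar>) \<longlonglongrightarrow> 0"
    using tendsto_rabs_zero[OF filterlim_compose[OF LIMSEQ_Suc k_lim]] by (simp add: o_def)
  then show "(\<lambda>n. \<bar>r (Suc (k n))\<bar> + 2 * ?E n) \<longlonglongrightarrow> 0"
    by (intro tendsto_add_zero tendsto_mult_right_zero E0)
qed

theorem theorem3:
  fixes P :: "'a measure"
    and X eps :: "int \<Rightarrow> 'a \<Rightarrow> 'h::{real_inner,banach,second_countable_topology}"
    and \<rho> :: "'h \<Rightarrow> 'h"
    and C :: "nat \<Rightarrow> real" and \<phi> :: "nat \<Rightarrow> 'h"
    and Cn :: "nat \<Rightarrow> 'a \<Rightarrow> nat \<Rightarrow> real" and phin :: "nat \<Rightarrow> 'a \<Rightarrow> nat \<Rightarrow> 'h"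
    and r :: "nat \<Rightarrow> real" and \<psi> \<psi>t :: "nat \<Rightarrow> 'h"
    and rh :: "nat \<Rightarrow> 'a \<Rightarrow> nat \<Rightarrow> real" and ps pst :: "nat \<Rightarrow> 'a \<Rightarrow> nat \<Rightarrow> 'h"
    and k :: "nat \<Rightarrow> nat" and Mn :: "nat \<Rightarrow> real" and Mb :: real
  assumes prob: "prob_space P"
    \<comment> \<open>\<rho> \<in> L(H) with ||\<rho>^k|| < 1 for k \<ge> k0\<close>
    and rho_bl: "bounded_linear \<rho>"
    and rho_pow: "\<exists>k0. \<forall>j\<ge>k0. onorm (\<rho> ^^ j) < 1"
    \<comment> \<open>strong white noise\<close>
    and eps_meas: "\<And>n. eps n \<in> borel_measurable P"
    and eps_indep: "prob_space.indep_vars P (\<lambda>_. borel) eps UNIV"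
    and eps_id: "\<And>n. distr P borel (eps n) = distr P borel (eps 0)"
    and eps_int: "\<And>n. integrable P (eps n)"
    and eps_mean: "\<And>n. (\<integral>\<omega>. eps n \<omega> \<partial>P) = 0"
    and eps_sq: "\<And>n. integrable P (\<lambda>\<omega>. (norm (eps n \<omega>))\<^sup>2)"
    and eps_sq_pos: "(\<integral>\<omega>. (norm (eps 0 \<omega>))\<^sup>2 \<partial>P) > 0"
    \<comment> \<open>X is a (strictly) stationary solution of the ARH(1) equation\<close>
    and X_meas: "\<And>n. X n \<in> borel_measurable P"
    and X_eq: "AE \<omega> in P. \<forall>n. X n \<omega> = \<rho> (X (n - 1) \<omega>) + eps n \<omega>"
    and X_stat: "\<And>J m. finite J \<Longrightarrow>
        distr P (PiM J (\<lambda>_. borel)) (\<lambda>\<omega>. \<lambda>j\<in>J. X (j + m) \<omega>)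
          = distr P (PiM J (\<lambda>_. borel)) (\<lambda>\<omega>. \<lambda>j\<in>J. X j \<omega>)"
    \<comment> \<open>spectral decomposition of C_X\<close>
    and C_mono: "\<And>j. j \<ge> 1 \<Longrightarrow> C (Suc j) \<le> C j"
    and phi_on: "orthonormal_on {1..} \<phi>"
    and phi_eig: "\<And>j. j \<ge> 1 \<Longrightarrow> cov_op P (X 0) (X 0) (\<phi> j) = C j *\<^sub>R \<phi> j"
    and C_spec: "\<And>x. (\<lambda>m. \<Sum>j\<in>{1..m}. (C j * inner x (\<phi> j)) *\<^sub>R \<phi> j)
                      \<longlonglongrightarrow> cov_op P (X 0) (X 0) x"
    \<comment> \<open>spectral decomposition of C_n\<close>
    and Cn_mono: "\<And>n \<omega> j. j \<ge> 1 \<Longrightarrow> Cn n \<omega> (Suc j) \<le> Cn n \<omega> j"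
    and Cn_nonneg: "\<And>n \<omega> j. Cn n \<omega> j \<ge> 0"
    and Cn_zero: "\<And>n \<omega> j. j > n \<Longrightarrow> Cn n \<omega> j = 0"
    and phin_on: "\<And>n \<omega>. orthonormal_on {1..n} (phin n \<omega>)"
    and Cn_spec: "\<And>n \<omega> x. emp_cov X n \<omega> x
                      = (\<Sum>j\<in>{1..n}. (Cn n \<omega> j * inner x (phin n \<omega> j)) *\<^sub>R phin n \<omega> j)"
    \<comment> \<open>singular value decomposition of \<rho>\<close>
    and r_mono: "\<And>j. j \<ge> 1 \<Longrightarrow> \<bar>r (Suc j)\<bar> \<le> \<bar>r j\<bar>"
    and psi_on: "orthonormal_on {1..} \<psi>"
    and psit_on: "orthonormal_on {1..} \<psi>t"
    and rho_svd: "\<And>x. (\<lambda>m. \<Sum>j\<in>{1..m}. (r j * inner x (\<psi> j)) *\<^sub>R \<psi>t j) \<longlonglongrightarrow> \<rho> x"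
    \<comment> \<open>singular value decomposition of D_n C_n^{-1}\<close>
    and rh_mono: "\<And>n \<omega> j. 1 \<le> j \<Longrightarrow> j < n \<Longrightarrow> \<bar>rh n \<omega> (Suc j)\<bar> \<le> \<bar>rh n \<omega> j\<bar>"
    and ps_on: "\<And>n \<omega>. orthonormal_on {1..n} (ps n \<omega>)"
    and pst_on: "\<And>n \<omega>. orthonormal_on {1..n} (pst n \<omega>)"
    and DC_svd: "\<And>n \<omega> h. emp_cross X n \<omega> (emp_cov_inv Cn phin n \<omega> h)
                      = (\<Sum>j\<in>{1..n}. (rh n \<omega> j * inner h (ps n \<omega> j)) *\<^sub>R pst n \<omega> j)"
    \<comment> \<open>truncation parameter\<close>
    and k_lim: "filterlim k at_top sequentially"
    and k_lt: "\<And>n. n \<ge> 1 \<Longrightarrow> real (k n) / real n < 1"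
    and Lam_fin: "\<And>j. j \<ge> 1 \<Longrightarrow> C (Suc j) < C j"
    and Lam_rate: "\<exists>\<beta>>1/2. (\<lambda>n. sqrt (real (k n)) * Lambda_gap C (k n))
                      \<in> o(\<lambda>n. real n powr (1/4) / ln (real n) powr \<beta>)"
    \<comment> \<open>A1 -- A4\<close>
    and A1: "AE \<omega> in P. norm (X 0 \<omega>) < Mb"
    and A2: "AE \<omega> in P. \<forall>n. k n \<ge> 1 \<longrightarrow> Cn n \<omega> (k n) > 0"
    and A3_C: "\<And>j. j \<ge> 1 \<Longrightarrow> C j > 0"
    and A3_D: "nuclear_op (cov_op P (X 0) (X 1))"
    and A3_rho: "compact_op \<rho>"
    and A4: "AE \<omega> in P. \<forall>n\<ge>1. (SUP j\<in>{1..}. \<bar>r j\<bar>) + (SUP j\<in>{1..n}. \<bar>rh n \<omega> j\<bar>) \<le> 1"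
    \<comment> \<open>\<rho> trace operator\<close>
    and rho_trace: "nuclear_op \<rho>"
    \<comment> \<open>rate M_n and \<Lambda>^\<rho>\<close>
    and LamRho_fin: "\<And>j. j \<ge> 1 \<Longrightarrow> \<bar>r (Suc j)\<bar> < \<bar>r j\<bar>"
    and Mn_rate: "AE \<omega> in P. (\<lambda>n. onorm (\<lambda>h. emp_cross X n \<omega> (emp_cov_inv Cn phin n \<omega> h) - \<rho> h))
                      \<in> O(Mn)"
    and LamRho_rate: "(\<lambda>n. real (k n) * Lambda_rho r (k n)) \<in> o(\<lambda>n. 1 / Mn n)"
  shows "AE \<omega> in P. (\<lambda>n. onorm (\<lambda>x. diag_est rh ps pst (k n) n \<omega> x - \<rho> x)) \<longlonglongrightarrow> 0"
proof -
  have svd: "\<And>x. (\<lambda>m. svd_partial r \<psi> \<psi>t m x) \<longlonglongrightarrow> \<rho> x"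
    unfolding svd_partial_def by (rule rho_svd)
  have k_less: "\<And>n. 1 \<le> n \<Longrightarrow> k n < n"
    using k_lt by (simp add: divide_less_eq)
  have Mn0: "Mn \<longlonglongrightarrow> 0"
    using filterlim_Lambda_rho_at_top[OF LamRho_fin[OF order_refl] k_lim] LamRho_rate
    by (rule tendsto_zero_if_smallo_inverse)
  show ?thesis
    using Mn_rate
  proof (rule eventually_mono)
    fix \<omega>
    assume "(\<lambda>n. onorm (\<lambda>h. emp_cross X n \<omega> (emp_cov_inv Cn phin n \<omega> h) - \<rho> h)) \<in> O(Mn)"
    then have "(\<lambda>n. onorm (\<lambda>h. svd_partial (rh n \<omega>) (ps n \<omega>) (pst n \<omega>) n h - \<rho> h)) \<in> O(Mn)"
      unfolding svd_partial_def by (simp only: DC_svd)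
    then have E0: "(\<lambda>n. onorm (\<lambda>h. svd_partial (rh n \<omega>) (ps n \<omega>) (pst n \<omega>) n h - \<rho> h)) \<longlonglongrightarrow> 0"
      using Mn0 by (rule tendsto_zero_if_bigo)
    show "(\<lambda>n. onorm (\<lambda>x. diag_est rh ps pst (k n) n \<omega> x - \<rho> x)) \<longlonglongrightarrow> 0"
      unfolding diag_est_eq_svd_partial
      by (rule truncated_svd_tendsto_zero[where r=r and \<rho>=\<rho>,
            OF k_less k_lim _ _ _ A3_rho psi_on psit_on svd r_mono E0])
        (assumption | rule ps_on pst_on rh_mono)+
  qed
qed

end
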